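(* Let $r,q$ be positive integers, $k\ge1$, $p_1,\dots,p_k\ge1$ integers, and $s_i,a_{ij},\nu$ integers ($1\le i\le k$, $1\le j\le p_i$) with all $a_{ij}>0$. Suppose $B(n)=\lceil rn/q\rceil$ formally satisfies the recursion $R(n)=\sum_{i=1}^k R\big(n-s_i-\sum_{j=1}^{p_i}R(n-a_{ij})\big)+\nu$, and suppose $rp_i/q\le 1$ for all $i$. Then there exist a recursion $R'$ of the same form whose parameter vector is equivalent to that of $R$, and a positive integer $m$, such that $\lceil rn/q\rceil$ is the unique solution generated by $R'$ with initial conditions $R'(t)=\lceil tr/q\rceil$ for $1\le t\le m$. If moreover $rp_i/q<1$ for all $i$, then the same holds for $R$ itself (with some positive integer $m$).
   Context: A sequence $B:\mathbb{Z}\to\mathbb{Z}$ formally satisfies $R$ if for every integer $n$, $B(n)=\sum_{i=1}^k B\big(n-s_i-\sum_{j=1}^{p_i}B(n-a_{ij})\big)+\nu$. The parameter vector of $R$ is $\langle s_1;a_{11},\dots,a_{1p_1}:\cdots:s_k;a_{k1},\dots,a_{kp_k}|\nu\rangle$; equivalence of parameter vectors (with the same $k,p_i$) is the equivalence relation generated by the moves (i) replace $s_i$ by $s_i+dr$ and one $a_{ij}$ by $a_{ij}+dq$ ($d\in\mathbb{Z}$), and (ii) replace $s_i$ by $s_i+cq$ and $\nu$ by $\nu+cr$ ($c\in\mathbb{Z}$). "$B$ is the unique solution generated by $R'$ with initial conditions $R'(t)=B(t)$, $1\le t\le m$" means: for every $n>m$, when $R'(1),\dots,R'(n-1)$ are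 given, every argument at which $R'$ must be evaluated in the right-hand side for $R'(n)$ lies in $\{1,\dots,n-1\}$, so the values $R'(n)$ are uniquely determined recursively, and the resulting sequence is $R'(n)=B(n)$ for all $n\ge1$. *)

theory Defs
  imports Complex_Main
begin

definition rhs :: "nat \<Rightarrow> (nat \<Rightarrow> nat) \<Rightarrow> (nat \<Rightarrow> int) \<Rightarrow> (nat \<Rightarrow> nat \<Rightarrow> int) \<Rightarrow> int
                  \<Rightarrow> (int \<Rightarrow> int) \<Rightarrow> int \<Rightarrow> int" where
  "rhs k p s a nu B n =
     (\<Sum>i=1..k. B (n - s i - (\<Sum>j=1..p i. B (n - a i j)))) + nu"

definition formally_satisfies ::
  "nat \<Rightarrow> (nat \<Rightarrow> nat) \<Rightarrow> (nat \<Rightarrow> int) \<Rightarrow> (nat \<Rightarrow> nat \<Rightarrow> int) \<Rightarrow> int \<Rightarrow> (int \<Rightarrow> int) \<Rightarrow> bool" where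
  "formally_satisfies k p s a nu B \<longleftrightarrow> (\<forall>n::int. B n = rhs k p s a nu B n)"

definition param_move ::
  "int \<Rightarrow> int \<Rightarrow> nat \<Rightarrow> (nat \<Rightarrow> nat)
   \<Rightarrow> (nat \<Rightarrow> int) \<times> (nat \<Rightarrow> nat \<Rightarrow> int) \<times> int
   \<Rightarrow> (nat \<Rightarrow> int) \<times> (nat \<Rightarrow> nat \<Rightarrow> int) \<times> int \<Rightarrow> bool" where
  "param_move r q k p x y \<longleftrightarrow>
     (case x of (s, a, nu) \<Rightarrow>
       (\<exists>i\<in>{1..k}. \<exists>j\<in>{1..p i}. \<exists>d::int.
          y = (s(i := s i + d * r), a(i := (a i)(j := a i j + d * q)), nu))
     \<or> (\<exists>i\<in>{1..k}. \<exists>c::int.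
          y = (s(i := s i + c * q), a, nu + c * r)))"

definition param_equiv ::
  "int \<Rightarrow> int \<Rightarrow> nat \<Rightarrow> (nat \<Rightarrow> nat)
   \<Rightarrow> (nat \<Rightarrow> int) \<times> (nat \<Rightarrow> nat \<Rightarrow> int) \<times> int
   \<Rightarrow> (nat \<Rightarrow> int) \<times> (nat \<Rightarrow> nat \<Rightarrow> int) \<times> int \<Rightarrow> bool" where
  "param_equiv r q k p = equivclp (param_move r q k p)"

text \<open>B is the unique solution generated by the recursion with initial conditions
  B(1),...,B(m): for every n > m, when the values at 1..n-1 are those of B, every
  argument needed in the right-hand side for n lies in {1..n-1}, and the
  right-hand side equals B(n). (By induction on n this says exactly that the
  recursively determined sequence is well defined and coincides with B on n >= 1.)\<close>
definition generates ::
  "nat \<Rightarrow> (nat \<Rightarrow> nat) \<Rightarrow> (nat \<Rightarrow> int) \<Rightarrow> (nat \<Rightarrow> nat \<Rightarrow> int) \<Rightarrow> int \<Rightarrow> (int \<Rightarrow> int) \<Rightarrow> int \<Rightarrow> bool" where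
  "generates k p s a nu B m \<longleftrightarrow>
     (\<forall>n::int. n > m \<longrightarrow>
        (\<forall>i\<in>{1..k}. (\<forall>j\<in>{1..p i}. 1 \<le> n - a i j \<and> n - a i j \<le> n - 1)
           \<and> 1 \<le> n - s i - (\<Sum>j=1..p i. B (n - a i j))
           \<and> n - s i - (\<Sum>j=1..p i. B (n - a i j)) \<le> n - 1)
        \<and> B n = rhs k p s a nu B n)"

end

theory Submission imports Defs begin

text \<open>Write B n = \<lceil>r n / q\<rceil>. Since B (x + c q) = B x + c r, both kinds of moves on
  parameter vectors leave the right-hand side evaluated at B unchanged, so B formally satisfies
  every equivalent recursion. The inner sums satisfy
  p r n - r \<Sigma>a \<le> q \<Sigma>j B (n - a j) \<le> p (r n + q), so the inner arguments n - a j and the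
  outer arguments n - s - \<Sigma>j B (n - a j) are eventually at most n - 1, and all that remains is to
  make the outer arguments eventually positive. If r p < q they grow linearly in n; if only
  r p \<le> q they are bounded below by -s - p, and replacing every s by s - C q for a large C
  (a move of the second kind) makes them positive.\<close>

abbreviation ceil_ratio :: "int \<Rightarrow> int \<Rightarrow> int \<Rightarrow> int" where
  "ceil_ratio r q \<equiv> (\<lambda>n. \<lceil>real_of_int (r * n) / real_of_int q\<rceil>)"

lemma ceil_ratio_bounds:
  assumes "q > 0"
  shows "r * x \<le> q * ceil_ratio r q x" and "q * ceil_ratio r q x < r * x + q"
proof -
  define m where "m = - (r * x) mod q"
  have "q * ceil_ratio r q x = q * - (- (r * x) div q)"
    by (simp only: ceiling_divide_eq_div)
  also have "\<dots> = r * x + m"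
    unfolding m_def using mult_div_mod_eq[of q "- (r * x)"] by (simp only: mult_minus_right)
  finally have "q * ceil_ratio r q x = r * x + m" .
  moreover have "0 \<le> m" and "m < q"
    unfolding m_def using assms by simp_all
  ultimately show "r * x \<le> q * ceil_ratio r q x" and "q * ceil_ratio r q x < r * x + q"
    by linarith+
qed

lemma ceil_ratio_shift:
  assumes "q > 0"
  shows "ceil_ratio r q (x + c * q) = ceil_ratio r q x + c * r"
proof -
  have "real_of_int (r * (x + c * q)) / real_of_int q
      = real_of_int (r * x) / real_of_int q + real_of_int (c * r)"
    using assms by (simp add: field_simps)
  then show ?thesis by (simp only: ceiling_add_of_int)
qed

lemma ratio_le_one_iff:
  assumes "q > 0"
  shows "real_of_int r * real n / real_of_int q \<le> 1 \<longleftrightarrow> r * int n \<le> q"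
proof -
  have "real_of_int r * real n = real_of_int (r * int n)" by simp
  then show ?thesis using assms by (simp only: divide_le_eq_1_pos of_int_le_iff of_int_0_less_iff)
qed

lemma ratio_less_one_iff:
  assumes "q > 0"
  shows "real_of_int r * real n / real_of_int q < 1 \<longleftrightarrow> r * int n < q"
proof -
  have "real_of_int r * real n = real_of_int (r * int n)" by simp
  then show ?thesis using assms by (simp only: divide_less_eq_1_pos of_int_less_iff of_int_0_less_iff)
qed

lemma ceil_ratio_sum_lower:
  assumes "q > 0"
  shows "int l * (r * n) - r * (\<Sum>j=1..l. b j) \<le> q * (\<Sum>j=1..l. ceil_ratio r q (n - b j))"
proof -
  have "int l * (r * n) - r * (\<Sum>j=1..l. b j) = (\<Sum>j=1..l. r * (n - b j))"
    by (simp add: sum_distrib_left sum_subtractf algebra_simps)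
  also have "\<dots> \<le> (\<Sum>j=1..l. q * ceil_ratio r q (n - b j))"
    using ceil_ratio_bounds(1)[OF assms] by (rule sum_mono)
  finally show ?thesis by (simp add: sum_distrib_left)
qed

lemma ceil_ratio_sum_upper:
  assumes "r \<ge> 0" "q > 0" "\<forall>j\<in>{1..l}. b j \<ge> 0"
  shows "q * (\<Sum>j=1..l. ceil_ratio r q (n - b j)) \<le> int l * (r * n + q)"
proof -
  have "q * (\<Sum>j=1..l. ceil_ratio r q (n - b j)) = (\<Sum>j=1..l. q * ceil_ratio r q (n - b j))"
    by (simp add: sum_distrib_left)
  also have "\<dots> \<le> (\<Sum>j=1..l. r * n + q)"
  proof (rule sum_mono)
    fix j assume "j \<in> {1..l}"
    then have "r * (n - b j) \<le> r * n"
      using assms by (simp add: mult_left_mono)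
    then show "q * ceil_ratio r q (n - b j) \<le> r * n + q"
      using ceil_ratio_bounds(2)[OF assms(2), of r "n - b j"] by linarith
  qed
  finally show ?thesis by simp
qed

lemma eventually_ceil_ratio_sum_ge:
  fixes l :: nat
  assumes "r > 0" "q > 0" "l \<ge> 1"
  shows "\<forall>\<^sub>F n in at_top. c \<le> (\<Sum>j=1..l. ceil_ratio r q (n - b j))"
proof (rule eventually_at_top_linorderI)
  fix n assume n: "max 0 (r * (\<Sum>j=1..l. b j) + q * \<bar>c\<bar>) \<le> n"
  have "1 \<le> int l * r"
    using mult_mono[of 1 "int l" 1 r] assms by simp
  then have "1 * n \<le> int l * r * n"
    using n by (intro mult_right_mono) simp_all
  then have "n \<le> int l * (r * n)"
    by (simp add: mult.assoc)
  moreover have "q * c \<le> q * \<bar>c\<bar>"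
    using assms(2) by (simp add: mult_left_mono)
  ultimately have "q * c \<le> q * (\<Sum>j=1..l. ceil_ratio r q (n - b j))"
    using ceil_ratio_sum_lower[OF assms(2), of l r n b] n by linarith
  then show "c \<le> (\<Sum>j=1..l. ceil_ratio r q (n - b j))"
    using assms(2) by simp
qed

lemma ceil_ratio_sum_le:
  assumes "r \<ge> 0" "q > 0" "r * int l \<le> q" "\<forall>j\<in>{1..l}. b j \<ge> 0" "n \<ge> 0"
  shows "(\<Sum>j=1..l. ceil_ratio r q (n - b j)) \<le> n + int l"
proof -
  have "r * int l * n \<le> q * n"
    using assms(3,5) by (rule mult_right_mono)
  then have "q * (\<Sum>j=1..l. ceil_ratio r q (n - b j)) \<le> q * (n + int l)"
    using ceil_ratio_sum_upper[OF assms(1,2,4), of n] by (simp add: algebra_simps)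
  then show ?thesis
    using assms(2) by simp
qed

lemma eventually_ceil_ratio_sum_gap_ge:
  assumes "r \<ge> 0" "q > 0" "r * int l < q" "\<forall>j\<in>{1..l}. b j \<ge> 0"
  shows "\<forall>\<^sub>F n in at_top. c \<le> n - (\<Sum>j=1..l. ceil_ratio r q (n - b j))"
proof (rule eventually_at_top_linorderI)
  fix n assume n: "max 0 (q * (\<bar>c\<bar> + int l)) \<le> n"
  have "r * int l * n \<le> (q - 1) * n"
    using assms(3) n by (intro mult_right_mono) auto
  then have "q * (\<Sum>j=1..l. ceil_ratio r q (n - b j)) \<le> q * (n + int l) - n"
    using ceil_ratio_sum_upper[OF assms(1,2,4), of n] by (simp add: algebra_simps)
  moreover have "q * (\<bar>c\<bar> + int l) \<le> n"
    using n by simp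
  moreover have "q * c \<le> q * \<bar>c\<bar>"
    using assms(2) by (simp add: mult_left_mono)
  ultimately have "q * (\<Sum>j=1..l. ceil_ratio r q (n - b j)) \<le> q * (n - c)"
    by (simp only: distrib_left right_diff_distrib)
  then show "c \<le> n - (\<Sum>j=1..l. ceil_ratio r q (n - b j))"
    using assms(2) by simp
qed

lemma rhs_param_move:
  assumes periodic: "\<And>x c. B (x + c * q) = B x + c * r"
    and move: "param_move r q k p (s, a, nu) (s', a', nu')"
  shows "rhs k p s' a' nu' B n = rhs k p s a nu B n"
  using move unfolding param_move_def prod.case
proof (elim disjE bexE exE)
  fix i0 j0 d
  assume "i0 \<in> {1..k}" and j0: "j0 \<in> {1..p i0}"
    and new: "(s', a', nu') = (s(i0 := s i0 + d * r), a(i0 := (a i0)(j0 := a i0 j0 + d * q)), nu)"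
  have inner: "(\<Sum>j=1..p i0. B (n - a' i0 j)) = (\<Sum>j=1..p i0. B (n - a i0 j)) - d * r"
  proof -
    have "(\<Sum>j=1..p i0. B (n - a' i0 j))
        = (\<Sum>j=1..p i0. B (n - a i0 j) - (if j = j0 then d * r else 0))"
      using periodic[of "n - a i0 j0" "- d"] new by (intro sum.cong) (auto simp: algebra_simps)
    also have "\<dots> = (\<Sum>j=1..p i0. B (n - a i0 j)) - d * r"
      using j0 by (simp add: sum_subtractf)
    finally show ?thesis .
  qed
  have outer: "n - s' i - (\<Sum>j=1..p i. B (n - a' i j)) = n - s i - (\<Sum>j=1..p i. B (n - a i j))" for i
    using new inner by (cases "i = i0") simp_all
  have "rhs k p s' a' nu' B n = rhs k p s a nu' B n"
    unfolding rhs_def outer ..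
  then show ?thesis
    using new by simp
next
  fix i0 c
  assume i0: "i0 \<in> {1..k}" and new: "(s', a', nu') = (s(i0 := s i0 + c * q), a, nu + c * r)"
  have "B (n - s' i - (\<Sum>j=1..p i. B (n - a' i j)))
      = B (n - s i - (\<Sum>j=1..p i. B (n - a i j))) - (if i = i0 then c * r else 0)" for i
    using periodic[of "n - s i0 - (\<Sum>j=1..p i0. B (n - a i0 j))" "- c"] new
    by (simp add: algebra_simps)
  then show ?thesis
    using new i0 unfolding rhs_def by (simp add: sum_subtractf)
qed

lemma formally_satisfies_param_equiv:
  assumes periodic: "\<And>x c. B (x + c * q) = B x + c * r"
    and equiv: "param_equiv r q k p (s, a, nu) (s', a', nu')"
    and sat: "formally_satisfies k p s a nu B"
  shows "formally_satisfies k p s' a' nu' B"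
proof -
  have "case x of (s'', a'', nu'') \<Rightarrow> rhs k p s'' a'' nu'' B = rhs k p s a nu B"
    if "param_equiv r q k p (s, a, nu) x" for x
    using that unfolding param_equiv_def
  proof (induction rule: equivclp_induct)
    case (step y z)
    obtain sy ay nuy where y: "y = (sy, ay, nuy)" by (cases y)
    obtain sz az nuz where z: "z = (sz, az, nuz)" by (cases z)
    have "rhs k p sz az nuz B n = rhs k p sy ay nuy B n" for n
      using step.hyps(2) rhs_param_move[OF periodic] unfolding y z by metis
    then show ?case
      using step.IH unfolding y z by (simp add: fun_eq_iff)
  qed simp
  from this[OF equiv] show ?thesis
    using sat unfolding formally_satisfies_def by simp
qed

lemma param_equiv_shift_offsets:
  assumes "I \<subseteq> {1..k}"
  shows "param_equiv r q k p (s, a, nu)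
           (\<lambda>i. if i \<in> I then s i + c * q else s i, a, nu + int (card I) * c * r)"
proof -
  have "finite I" using assms finite_subset by blast
  then show ?thesis
    using assms
  proof (induction I rule: finite_induct)
    case empty
    then show ?case unfolding param_equiv_def by simp
  next
    case (insert i I)
    let ?s = "\<lambda>i. if i \<in> I then s i + c * q else s i"
    have "param_move r q k p (?s, a, nu + int (card I) * c * r)
        (\<lambda>i'. if i' \<in> insert i I then s i' + c * q else s i', a, nu + int (card (insert i I)) * c * r)"
      unfolding param_move_def prod.case
      using insert by (intro disjI2 bexI[of _ i] exI[of _ c]) (auto simp: fun_eq_iff algebra_simps)
    then show ?case
      using insert unfolding param_equiv_def by (blast intro: equivclp_into_equivclp)
  qed
qed

lemma generates_if_eventually_positive:
  assumes r: "r > 0" and q: "q > 0"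
    and p: "\<forall>i\<in>{1..k}. p i \<ge> 1"
    and a: "\<forall>i\<in>{1..k}. \<forall>j\<in>{1..p i}. a i j > 0"
    and sat: "formally_satisfies k p s a nu (ceil_ratio r q)"
    and pos: "\<forall>i\<in>{1..k}. \<forall>\<^sub>F n in at_top. 1 \<le> n - s i - (\<Sum>j=1..p i. ceil_ratio r q (n - a i j))"
  shows "\<exists>m>0. generates k p s a nu (ceil_ratio r q) m"
proof -
  define in_range where "in_range n i \<longleftrightarrow>
      (\<forall>j\<in>{1..p i}. 1 \<le> n - a i j \<and> n - a i j \<le> n - 1)
      \<and> 1 \<le> n - s i - (\<Sum>j=1..p i. ceil_ratio r q (n - a i j))
      \<and> n - s i - (\<Sum>j=1..p i. ceil_ratio r q (n - a i j)) \<le> n - 1" for n i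
  have "\<forall>\<^sub>F n in at_top. in_range n i" if i: "i \<in> {1..k}" for i
  proof -
    have "\<forall>j\<in>{1..p i}. \<forall>\<^sub>F n in at_top. 1 \<le> n - a i j \<and> n - a i j \<le> n - 1"
    proof
      fix j assume "j \<in> {1..p i}"
      then have "a i j > 0" using a i by blast
      then show "\<forall>\<^sub>F n in at_top. 1 \<le> n - a i j \<and> n - a i j \<le> n - 1"
        by (auto intro: eventually_mono[OF eventually_ge_at_top[of "a i j + 1"]])
    qed
    note inner = eventually_ball_finite[OF finite_atLeastAtMost this]
    have lower: "\<forall>\<^sub>F n in at_top. 1 \<le> n - s i - (\<Sum>j=1..p i. ceil_ratio r q (n - a i j))"
      using pos i by blast
    have upper: "\<forall>\<^sub>F n in at_top. n - s i - (\<Sum>j=1..p i. ceil_ratio r q (n - a i j)) \<le> n - 1"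
      using eventually_ceil_ratio_sum_ge[OF r q, of "p i" "1 - s i" "a i"] p i
      by (auto elim: eventually_mono)
    show ?thesis
      unfolding in_range_def by (intro eventually_conj inner lower upper)
  qed
  then have "\<forall>\<^sub>F n in at_top. \<forall>i\<in>{1..k}. in_range n i"
    by (intro eventually_ball_finite) auto
  then obtain N where N: "\<forall>n\<ge>N. \<forall>i\<in>{1..k}. in_range n i"
    unfolding eventually_at_top_linorder by blast
  have "generates k p s a nu (ceil_ratio r q) (max 1 N)"
    unfolding generates_def
  proof (intro allI impI conjI)
    fix n :: int assume "max 1 N < n"
    then have "\<forall>i\<in>{1..k}. in_range n i"
      using N by simp
    then show "\<forall>i\<in>{1..k}. (\<forall>j\<in>{1..p i}. 1 \<le> n - a i j \<and> n - a i j \<le> n - 1)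
        \<and> 1 \<le> n - s i - (\<Sum>j=1..p i. ceil_ratio r q (n - a i j))
        \<and> n - s i - (\<Sum>j=1..p i. ceil_ratio r q (n - a i j)) \<le> n - 1"
      unfolding in_range_def .
    show "ceil_ratio r q n = rhs k p s a nu (ceil_ratio r q) n"
      using sat unfolding formally_satisfies_def ..
  qed
  then show ?thesis by (intro exI[of _ "max 1 N"]) simp
qed

lemma generates_if_ratio_less:
  assumes r: "r > 0" and q: "q > 0"
    and p: "\<forall>i\<in>{1..k}. p i \<ge> 1"
    and a: "\<forall>i\<in>{1..k}. \<forall>j\<in>{1..p i}. a i j > 0"
    and sat: "formally_satisfies k p s a nu (ceil_ratio r q)"
    and ratio: "\<forall>i\<in>{1..k}. r * int (p i) < q"
  shows "\<exists>m>0. generates k p s a nu (ceil_ratio r q) m"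
proof (rule generates_if_eventually_positive[OF r q p a sat], intro ballI)
  fix i assume i: "i \<in> {1..k}"
  have "\<forall>\<^sub>F n in at_top. 1 + s i \<le> n - (\<Sum>j=1..p i. ceil_ratio r q (n - a i j))"
    using r q ratio a i by (intro eventually_ceil_ratio_sum_gap_ge) (auto simp: less_imp_le)
  then show "\<forall>\<^sub>F n in at_top. 1 \<le> n - s i - (\<Sum>j=1..p i. ceil_ratio r q (n - a i j))"
    by (rule eventually_mono) simp
qed

lemma ex_param_equiv_generates:
  assumes r: "r > 0" and q: "q > 0"
    and p: "\<forall>i\<in>{1..k}. p i \<ge> 1"
    and a: "\<forall>i\<in>{1..k}. \<forall>j\<in>{1..p i}. a i j > 0"
    and sat: "formally_satisfies k p s a nu (ceil_ratio r q)"
    and ratio: "\<forall>i\<in>{1..k}. r * int (p i) \<le> q"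
  shows "\<exists>s' nu' m. param_equiv r q k p (s, a, nu) (s', a, nu') \<and> m > 0
           \<and> generates k p s' a nu' (ceil_ratio r q) m"
proof -
  define C where "C = (\<Sum>i=1..k. \<bar>s i\<bar> + int (p i) + 1)"
  have C: "\<bar>s i\<bar> + int (p i) + 1 \<le> C * q" if "i \<in> {1..k}" for i
  proof -
    have "\<bar>s i\<bar> + int (p i) + 1 \<le> C"
      unfolding C_def using that by (intro member_le_sum) auto
    moreover have "C * 1 \<le> C * q"
      using calculation q by (intro mult_left_mono) auto
    ultimately show ?thesis by simp
  qed
  define s' where "s' = (\<lambda>i. if i \<in> {1..k} then s i + (- C) * q else s i)"
  define nu' where "nu' = nu + int (card {1..k}) * (- C) * r"
  have equiv: "param_equiv r q k p (s, a, nu) (s', a, nu')"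
    unfolding s'_def nu'_def by (rule param_equiv_shift_offsets) simp
  have sat': "formally_satisfies k p s' a nu' (ceil_ratio r q)"
    using formally_satisfies_param_equiv[OF ceil_ratio_shift[OF q] equiv sat] .
  have "\<forall>i\<in>{1..k}. \<forall>\<^sub>F n in at_top. 1 \<le> n - s' i - (\<Sum>j=1..p i. ceil_ratio r q (n - a i j))"
  proof (intro ballI eventually_at_top_linorderI)
    fix i and n :: int assume i: "i \<in> {1..k}" and n: "0 \<le> n"
    have "(\<Sum>j=1..p i. ceil_ratio r q (n - a i j)) \<le> n + int (p i)"
      using r q ratio a i n by (intro ceil_ratio_sum_le) (auto simp: less_imp_le)
    then show "1 \<le> n - s' i - (\<Sum>j=1..p i. ceil_ratio r q (n - a i j))"
      using C[OF i] i unfolding s'_def by simp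
  qed
  then show ?thesis
    using generates_if_eventually_positive[OF r q p a sat'] equiv by blast
qed

theorem theorem4:
  fixes r q nu :: int and k :: nat and p :: "nat \<Rightarrow> nat"
    and s :: "nat \<Rightarrow> int" and a :: "nat \<Rightarrow> nat \<Rightarrow> int"
  assumes "r > 0" and "q > 0" and "k \<ge> 1"
    and "\<forall>i\<in>{1..k}. p i \<ge> 1"
    and "\<forall>i\<in>{1..k}. \<forall>j\<in>{1..p i}. a i j > 0"
    and "formally_satisfies k p s a nu (\<lambda>n. \<lceil>real_of_int (r * n) / real_of_int q\<rceil>)"
    and "\<forall>i\<in>{1..k}. real_of_int r * real (p i) / real_of_int q \<le> 1"
  shows "(\<exists>s' a' nu' m. param_equiv r q k p (s, a, nu) (s', a', nu') \<and> m > 0 \<and>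
            generates k p s' a' nu' (\<lambda>n. \<lceil>real_of_int (r * n) / real_of_int q\<rceil>) m)
       \<and> ((\<forall>i\<in>{1..k}. real_of_int r * real (p i) / real_of_int q < 1) \<longrightarrow>
            (\<exists>m>0. generates k p s a nu (\<lambda>n. \<lceil>real_of_int (r * n) / real_of_int q\<rceil>) m))"
proof (intro conjI impI)
  have "\<forall>i\<in>{1..k}. r * int (p i) \<le> q"
    using assms(7) ratio_le_one_iff[OF assms(2)] by blast
  from ex_param_equiv_generates[OF assms(1,2,4-6) this]
  show "\<exists>s' a' nu' m. param_equiv r q k p (s, a, nu) (s', a', nu') \<and> m > 0 \<and>
      generates k p s' a' nu' (ceil_ratio r q) m"
    by blast
next
  assume "\<forall>i\<in>{1..k}. real_of_int r * real (p i) / real_of_int q < 1"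
  then have "\<forall>i\<in>{1..k}. r * int (p i) < q"
    using ratio_less_one_iff[OF assms(2)] by blast
  with assms(1,2,4-6) show "\<exists>m>0. generates k p s a nu (ceil_ratio r q) m"
    by (rule generates_if_ratio_less)
qed

end
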